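(* Let $R$ be an infinite-dimensional affine algebra over a field $K$, let $\{e_i\}_{i\ge1}$ be a basis of $R$ over $K$, and let $S=\{r_1,\dots,r_s\}\subseteq R$. Suppose that for every $l$ and every choice of distinct basis elements $e_{i_1},\dots,e_{i_l}$, the $K$-span of $\{e_{i_t}r_j: 1\le t\le l,\ 1\le j\le s\}$ has dimension at least $2l$. Then there exist a partition $\{e_i\}_{i\ge1}=A_1\cup\cdots\cup A_m$ and elements $g_1,h_1,\dots,g_m,h_m\in S$ such that the sets $A_1g_1,A_1h_1,A_2g_2,A_2h_2,\dots,A_mg_m,A_mh_m$ are mutually independent.
   Context: An affine algebra is a finitely generated associative algebra over $K$, not necessarily unital. For $A\subseteq R$, $g\in R$, $Ag=\{ag:a\in A\}$. Subsets $B_1,\dots,B_k$ of $R$ are mutually independent if they are pairwise disjoint and their union is linearly independent over $K$. *)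

theory Defs
  imports Main "HOL.Vector_Spaces"
begin

definition algebra_over :: "('k::field \<Rightarrow> 'a::ring \<Rightarrow> 'a) \<Rightarrow> bool" where
  "algebra_over scale \<longleftrightarrow> module scale \<and>
     (\<forall>c x y. scale c (x * y) = scale c x * y \<and> scale c (x * y) = x * scale c y)"

inductive_set subalg_gen :: "('k::field \<Rightarrow> 'a::ring \<Rightarrow> 'a) \<Rightarrow> 'a set \<Rightarrow> 'a set"
  for scale :: "'k::field \<Rightarrow> 'a::ring \<Rightarrow> 'a" and G :: "'a set" where
  gen: "x \<in> G \<Longrightarrow> x \<in> subalg_gen scale G"
| zero: "0 \<in> subalg_gen scale G"
| add: "x \<in> subalg_gen scale G \<Longrightarrow> y \<in> subalg_gen scale G \<Longrightarrow> x + y \<in> subalg_gen scale G"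
| mult: "x \<in> subalg_gen scale G \<Longrightarrow> y \<in> subalg_gen scale G \<Longrightarrow> x * y \<in> subalg_gen scale G"
| smult: "x \<in> subalg_gen scale G \<Longrightarrow> scale c x \<in> subalg_gen scale G"

definition affine_algebra :: "('k::field \<Rightarrow> 'a::ring \<Rightarrow> 'a) \<Rightarrow> bool" where
  "affine_algebra scale \<longleftrightarrow> algebra_over scale \<and>
     (\<exists>G. finite G \<and> subalg_gen scale G = UNIV)"

definition mutually_independent ::
    "('k::field \<Rightarrow> 'a::ring \<Rightarrow> 'a) \<Rightarrow> 'i set \<Rightarrow> ('i \<Rightarrow> 'a set) \<Rightarrow> bool" where
  "mutually_independent scale I B \<longleftrightarrow>
     (\<forall>i\<in>I. \<forall>j\<in>I. i \<noteq> j \<longrightarrow> B i \<inter> B j = {}) \<and>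
     \<not> module.dependent scale (\<Union>i\<in>I. B i)"

end

theory Submission
  imports Defs
begin

(*
  The growth hypothesis says that the family T n = e (n div 2) S, in which each set e_i S
  occurs twice, satisfies Rado's condition card I <= dim (UN i:I. T i). Rado's theorem for
  linear matroids (Hall's theorem with dimension in place of cardinality) then yields
  distinct, linearly independent representatives t (2i) = e_i g_i and t (2i+1) = e_i h_i
  with g_i, h_i in S. For finite families this is Rado's exchange argument based on the
  submodularity of dim; for the countable family at hand one pins the indices to singletons
  one after the other. Grouping the e_i by the pair (g_i, h_i), which takes only finitely
  many values, gives the partition.
*)

lemma card_le_twice_card_image_div2:
  assumes "finite I"
  shows "card I \<le> 2 * card ((\<lambda>n::nat. n div 2) ` I)"
proof -
  let ?D = "(\<lambda>n::nat. n div 2) ` I"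
  have "I \<subseteq> (\<lambda>(q, b). 2 * q + b) ` (?D \<times> {0, 1})"
  proof
    fix n assume "n \<in> I"
    then have "(n div 2, n mod 2) \<in> ?D \<times> {0, 1}" by auto
    then show "n \<in> (\<lambda>(q, b). 2 * q + b) ` (?D \<times> {0, 1})"
      by (rule rev_image_eqI) simp
  qed
  then have "card I \<le> card (?D \<times> {0::nat, 1})"
    using assms by (meson card_image_le card_mono finite_SigmaI finite_imageI finite.intros order_trans)
  then show ?thesis
    by (simp add: card_cartesian_product)
qed

context vector_space begin

lemma dim_mono_finite:
  assumes "A \<subseteq> B" "finite B"
  shows "dim A \<le> dim B"
proof -
  obtain C where C: "C \<subseteq> B" "independent C" "B \<subseteq> span C" "card C = dim B"
    by (rule basis_exists)
  have "A \<subseteq> span C"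
    using assms(1) C(3) by (rule order_trans)
  moreover have "finite C"
    using C(1) assms(2) by (rule finite_subset)
  ultimately have "dim A \<le> card C"
    by (rule dim_le_card)
  with C(4) show ?thesis
    by simp
qed

lemma card_le_dim_if_independent:
  assumes "independent I" "I \<subseteq> A" "finite A"
  shows "card I \<le> dim A"
proof -
  have "card I = dim I"
    using assms(1) by (simp add: dim_eq_card_independent)
  also have "\<dots> \<le> dim A"
    using assms(2,3) by (rule dim_mono_finite)
  finally show ?thesis .
qed

lemma independent_if_card_le_dim:
  assumes "finite X" "card X \<le> dim X"
  shows "independent X"
proof -
  obtain B where B: "B \<subseteq> X" "independent B" "X \<subseteq> span B" "card B = dim X"
    by (rule basis_exists)
  have "card B \<le> card X"
    using assms(1) B(1) by (rule card_mono)
  with B(4) assms(2) have "card B = card X"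
    by linarith
  with assms(1) B(1) have "B = X"
    by (rule card_subset_eq)
  with B(2) show ?thesis
    by simp
qed

lemma independent_if_finite_subsets_independent:
  assumes "\<And>F. finite F \<Longrightarrow> F \<subseteq> A \<Longrightarrow> independent F"
  shows "independent A"
  using assms unfolding dependent_explicit by blast

lemma dim_Un_Int_le:
  assumes "finite A" "finite B"
  shows "dim (A \<union> B) + dim (A \<inter> B) \<le> dim A + dim B"
proof -
  obtain C where C: "C \<subseteq> A \<inter> B" "independent C" "A \<inter> B \<subseteq> span C" "card C = dim (A \<inter> B)"
    by (rule basis_exists)
  have "C \<subseteq> A \<union> B"
    using C(1) by blast
  then obtain D where D: "C \<subseteq> D" "D \<subseteq> A \<union> B" "independent D" "A \<union> B \<subseteq> span D"
    using C(2) by (rule maximal_independent_subset_extend)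
  have "finite D"
    using D(2) assms by (meson finite_Un finite_subset)
  have "card (D \<inter> A) + card (D \<inter> B) = card D + card (D \<inter> A \<inter> B)"
    using card_Un_Int[of "D \<inter> A" "D \<inter> B"] \<open>finite D\<close> D(2)
    by (simp add: Int_Un_distrib[symmetric] Int_absorb2 Int_assoc Int_left_commute)
  moreover have "card C \<le> card (D \<inter> A \<inter> B)"
    using C(1) D(1) \<open>finite D\<close> by (intro card_mono) auto
  moreover have "card D = dim (A \<union> B)"
    using basis_card_eq_dim D by blast
  moreover have "card (D \<inter> A) \<le> dim A" "card (D \<inter> B) \<le> dim B"
    using independent_mono[OF D(3)] assms
    by (simp_all add: card_le_dim_if_independent)
  ultimately show ?thesis
    using C(4) by linarith
qed

definition rado_condition :: "('i \<Rightarrow> 'b set) \<Rightarrow> bool" where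
  "rado_condition T \<longleftrightarrow> (\<forall>I. finite I \<longrightarrow> card I \<le> dim (\<Union>i\<in>I. T i))"

lemma rado_conditionD: "rado_condition T \<Longrightarrow> finite I \<Longrightarrow> card I \<le> dim (\<Union>i\<in>I. T i)"
  unfolding rado_condition_def by blast

lemma rado_condition_update_violated:
  assumes "rado_condition T" "\<not> rado_condition (T(j := X))"
  obtains I where "finite I" "j \<notin> I" "dim (X \<union> (\<Union>i\<in>I. T i)) \<le> card I"
proof -
  obtain K where K: "finite K" "dim (\<Union>i\<in>K. (T(j := X)) i) < card K"
    using assms(2) unfolding rado_condition_def by (auto simp: not_le)
  have "j \<in> K"
  proof (rule ccontr)
    assume "j \<notin> K"
    then have "(\<Union>i\<in>K. (T(j := X)) i) = (\<Union>i\<in>K. T i)"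
      by auto
    with rado_conditionD[OF assms(1) K(1)] K(2) show False
      by simp
  qed
  then have "(\<Union>i\<in>K. (T(j := X)) i) = X \<union> (\<Union>i\<in>K - {j}. T i)"
    by auto
  moreover have "card K = Suc (card (K - {j}))"
    using K(1) \<open>j \<in> K\<close> by (rule card_Suc_Diff1[symmetric])
  ultimately show ?thesis
    using that[of "K - {j}"] K by simp
qed

text \<open>Rado's exchange argument: if removing x and removing y from T j both violated the
  condition, the two violating index sets would contradict submodularity of dim.\<close>
lemma rado_condition_remove_one:
  assumes rado: "rado_condition T" and fin: "\<And>i. finite (T i)"
    and xy: "x \<in> T j" "y \<in> T j" "x \<noteq> y"
  shows "rado_condition (T(j := T j - {x})) \<or> rado_condition (T(j := T j - {y}))"
proof (rule ccontr)
  assume "\<not> ?thesis"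
  then have "\<not> rado_condition (T(j := T j - {x}))" "\<not> rado_condition (T(j := T j - {y}))"
    by simp_all
  obtain I where I: "finite I" "j \<notin> I" "dim ((T j - {x}) \<union> (\<Union>i\<in>I. T i)) \<le> card I"
    by (rule rado_condition_update_violated[OF rado \<open>\<not> rado_condition (T(j := T j - {x}))\<close>])
  obtain J where J: "finite J" "j \<notin> J" "dim ((T j - {y}) \<union> (\<Union>i\<in>J. T i)) \<le> card J"
    by (rule rado_condition_update_violated[OF rado \<open>\<not> rado_condition (T(j := T j - {y}))\<close>])
  define A where "A = (T j - {x}) \<union> (\<Union>i\<in>I. T i)"
  define B where "B = (T j - {y}) \<union> (\<Union>i\<in>J. T i)"
  have finAB: "finite A" "finite B"
    unfolding A_def B_def using fin I(1) J(1) by auto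
  have "card (insert j (I \<union> J)) \<le> dim (\<Union>i\<in>insert j (I \<union> J). T i)"
    using rado_conditionD[OF rado, of "insert j (I \<union> J)"] I(1) J(1) by simp
  also have "\<dots> \<le> dim (A \<union> B)"
    using xy finAB by (intro dim_mono_finite) (auto simp: A_def B_def)
  finally have "Suc (card (I \<union> J)) \<le> dim (A \<union> B)"
    using I J by simp
  moreover have "card (I \<inter> J) \<le> dim (A \<inter> B)"
  proof -
    have "card (I \<inter> J) \<le> dim (\<Union>i\<in>I \<inter> J. T i)"
      using rado_conditionD[OF rado, of "I \<inter> J"] I(1) by simp
    also have "\<dots> \<le> dim (A \<inter> B)"
      using finAB by (intro dim_mono_finite) (auto simp: A_def B_def)
    finally show ?thesis .
  qed
  ultimately show False
    using dim_Un_Int_le[OF finAB] card_Un_Int[OF I(1) J(1)] I(3) J(3)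
    unfolding A_def B_def by linarith
qed

lemma rado_condition_pin_singleton:
  assumes "rado_condition T" "\<And>i. finite (T i)"
  shows "\<exists>t\<in>T j. rado_condition (T(j := {t}))"
  using assms
proof (induction "card (T j)" arbitrary: T rule: less_induct)
  case less
  show ?case
  proof (cases "\<exists>x\<in>T j. \<exists>y\<in>T j. x \<noteq> y")
    case True
    then obtain x y where xy: "x \<in> T j" "y \<in> T j" "x \<noteq> y" by blast
    then obtain z where z: "z \<in> T j" "rado_condition (T(j := T j - {z}))"
      using rado_condition_remove_one[OF less.prems xy] by blast
    have "card (T j - {z}) < card (T j)"
      using less.prems(2) z(1) by (rule card_Diff1_less)
    moreover have "\<And>i. finite ((T(j := T j - {z})) i)"
      using less.prems(2) by simp
    ultimately have "\<exists>t\<in>T j - {z}. rado_condition (T(j := {t}))"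
      using less.hyps[OF _ z(2)] by simp
    then show ?thesis
      by blast
  next
    case False
    have "1 \<le> dim (T j)"
      using rado_conditionD[OF less.prems(1), of "{j}"] by simp
    moreover have "dim {} = 0"
      using dim_le_card'[of "{}"] by simp
    ultimately obtain t where "t \<in> T j"
      by fastforce
    with False have "T(j := {t}) = T"
      by (intro fun_upd_idem) blast
    with \<open>t \<in> T j\<close> less.prems(1) show ?thesis
      by (intro bexI[of _ t]) simp_all
  qed
qed

text \<open>In stage n the indices below n are pinned to singletons; the choice made by SOME exists
  by rado_condition_pin_singleton as long as the condition holds.\<close>
fun pinned :: "(nat \<Rightarrow> 'b set) \<Rightarrow> nat \<Rightarrow> nat \<Rightarrow> 'b set" where
  "pinned T 0 = T"
| "pinned T (Suc n) =
     (pinned T n)(n := {SOME t. t \<in> pinned T n n \<and> rado_condition ((pinned T n)(n := {t}))})"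

lemma rado_condition_pinned:
  assumes "rado_condition T" "\<And>i. finite (T i)"
  shows "rado_condition (pinned T n) \<and> (\<forall>i. finite (pinned T n i) \<and> pinned T n i \<subseteq> T i)"
proof (induction n)
  case 0
  with assms show ?case by simp
next
  case (Suc n)
  let ?P = "pinned T n"
  define x where "x = (SOME t. t \<in> ?P n \<and> rado_condition (?P(n := {t})))"
  have "\<exists>t. t \<in> ?P n \<and> rado_condition (?P(n := {t}))"
    using rado_condition_pin_singleton[of ?P n] Suc by blast
  then have x: "x \<in> ?P n \<and> rado_condition (?P(n := {x}))"
    unfolding x_def by (rule someI_ex)
  have "pinned T (Suc n) = ?P(n := {x})"
    by (simp add: x_def)
  with Suc x show ?case
    by (simp del: fun_upd_apply) (auto simp: fun_upd_apply)
qed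

lemma pinned_stable: "i < n \<Longrightarrow> pinned T n i = pinned T (Suc i) i"
  by (induction n) (auto simp: less_Suc_eq)

lemma inj_independent_if_rado_condition_singletons:
  assumes "rado_condition (\<lambda>i. {t i})"
  shows "inj t" "independent (range t)"
proof -
  have "inj_on t I \<and> independent (t ` I)" if "finite I" for I
  proof -
    have "card I \<le> dim (t ` I)"
      using rado_conditionD[OF assms that] by (simp add: UNION_singleton_eq_range)
    moreover have "dim (t ` I) \<le> card (t ` I)" "card (t ` I) \<le> card I"
      using that by (simp_all add: dim_le_card' card_image_le)
    ultimately have "card (t ` I) = card I" "card (t ` I) \<le> dim (t ` I)"
      by linarith+
    with that show ?thesis
      by (simp add: eq_card_imp_inj_on independent_if_card_le_dim)
  qed
  then show "inj t"
    by (metis finite.emptyI finite_insert inj_on_def insertCI)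
  show "independent (range t)"
  proof (rule independent_if_finite_subsets_independent)
    fix F assume "finite F" "F \<subseteq> range t"
    then obtain I where "finite I" "F = t ` I"
      by (meson finite_subset_image)
    with \<open>\<And>I. finite I \<Longrightarrow> inj_on t I \<and> independent (t ` I)\<close> show "independent F" by blast
  qed
qed

text \<open>Each instance of the condition involves finitely many indices, all of which are
  pinned for good from some stage on.\<close>
theorem rado_independent_transversal:
  fixes T :: "nat \<Rightarrow> 'b set"
  assumes "rado_condition T" "\<And>i. finite (T i)"
  obtains t where "\<And>n. t n \<in> T n" "inj t" "independent (range t)"
proof -
  define t where "t i = the_elem (pinned T (Suc i) i)" for i
  have pinned_t: "pinned T (Suc i) i = {t i}" for i
    by (simp add: t_def)
  have "t i \<in> T i" for i
    using rado_condition_pinned[OF assms, of "Suc i"] pinned_t by blast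
  moreover have "rado_condition (\<lambda>i. {t i})"
    unfolding rado_condition_def
  proof (intro allI impI)
    fix I :: "nat set" assume "finite I"
    then obtain N where N: "\<And>i. i \<in> I \<Longrightarrow> i < N"
      by (metis finite_nat_set_iff_bounded)
    have "(\<Union>i\<in>I. pinned T N i) = (\<Union>i\<in>I. {t i})"
      using pinned_stable[OF N] pinned_t by simp
    then show "card I \<le> dim (\<Union>i\<in>I. {t i})"
      using rado_condition_pinned[OF assms, of N] \<open>finite I\<close> rado_conditionD by metis
  qed
  ultimately show ?thesis
    using that inj_independent_if_rado_condition_singletons by blast
qed

lemma rado_condition_doubled:
  fixes U :: "nat \<Rightarrow> 'b set"
  assumes "\<And>J. finite J \<Longrightarrow> 2 * card J \<le> dim (\<Union>j\<in>J. U j)"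
  shows "rado_condition (\<lambda>n. U (n div 2))"
  unfolding rado_condition_def
proof (intro allI impI)
  fix I :: "nat set" assume "finite I"
  then have "card I \<le> 2 * card ((\<lambda>n. n div 2) ` I)"
    by (rule card_le_twice_card_image_div2)
  also have "\<dots> \<le> dim (\<Union>n\<in>I. U (n div 2))"
    using assms[of "(\<lambda>n. n div 2) ` I"] \<open>finite I\<close> by (simp add: image_image)
  finally show "card I \<le> dim (\<Union>n\<in>I. U (n div 2))" .
qed

end

lemma mutually_independent_image:
  fixes scale :: "'k::field \<Rightarrow> 'a::ring \<Rightarrow> 'a"
  assumes "vector_space scale" "inj t" "\<not> module.dependent scale (range t)"
    and "\<And>x y. x \<in> I \<Longrightarrow> y \<in> I \<Longrightarrow> x \<noteq> y \<Longrightarrow> Q x \<inter> Q y = {}"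
  shows "mutually_independent scale I (\<lambda>x. t ` Q x)"
proof -
  interpret vector_space scale by fact
  show ?thesis
    unfolding mutually_independent_def
    using assms(2-4) dependent_mono[of "\<Union>x\<in>I. t ` Q x" "range t"]
    by (auto simp: image_Int[symmetric])
qed

lemma fibres_partition:
  assumes f: "bij_betw f {..<m} (range c)" and "inj e"
  shows "(\<Union>k<m. e ` (c -` {f k})) = range e"
    and "\<And>k. k < m \<Longrightarrow> e ` (c -` {f k}) \<noteq> {}"
    and "\<And>k k'. k < m \<Longrightarrow> k' < m \<Longrightarrow> k \<noteq> k' \<Longrightarrow> e ` (c -` {f k}) \<inter> e ` (c -` {f k'}) = {}"
proof -
  have range_c: "range c = f ` {..<m}"
    using f by (simp add: bij_betw_def)
  have "e i \<in> (\<Union>k<m. e ` (c -` {f k}))" for i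
  proof -
    obtain k where "k < m" "c i = f k"
      using range_c by (metis imageE lessThan_iff rangeI)
    then show ?thesis by blast
  qed
  then show "(\<Union>k<m. e ` (c -` {f k})) = range e"
    by blast
  show "e ` (c -` {f k}) \<noteq> {}" if "k < m" for k
  proof -
    have "f k \<in> range c"
      using range_c that by simp
    then show ?thesis by (metis empty_iff imageE vimage_singleton_eq image_eqI)
  qed
  show "e ` (c -` {f k}) \<inter> e ` (c -` {f k'}) = {}" if "k < m" "k' < m" "k \<noteq> k'" for k k'
  proof -
    have "f k \<noteq> f k'"
      using f that by (auto simp: bij_betw_def inj_on_def)
    then have "c -` {f k} \<inter> c -` {f k'} = {}"
      by auto
    then show ?thesis
      using \<open>inj e\<close> by (simp add: image_Int[symmetric])
  qed
qed

lemma paired_products_fibre_image: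
  fixes e s :: "nat \<Rightarrow> 'a::times"
  assumes t: "\<And>n. t n = e (n div 2) * s n" and c: "\<And>i. c i = (s (2 * i), s (2 * i + 1))"
  shows "(\<lambda>a. a * fst p) ` e ` (c -` {p}) = t ` {n. c (n div 2) = p \<and> even n}"
    and "(\<lambda>a. a * snd p) ` e ` (c -` {p}) = t ` {n. c (n div 2) = p \<and> odd n}"
proof -
  have even: "{n. c (n div 2) = p \<and> even n} = (\<lambda>i. 2 * i) ` (c -` {p})"
    by (auto elim!: evenE)
  have odd: "{n. c (n div 2) = p \<and> odd n} = (\<lambda>i. 2 * i + 1) ` (c -` {p})"
    by (auto elim!: oddE)
  have t_pair: "t (2 * i) = e i * fst (c i)" "t (2 * i + 1) = e i * snd (c i)" for i
    by (simp_all add: t c)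
  show "(\<lambda>a. a * fst p) ` e ` (c -` {p}) = t ` {n. c (n div 2) = p \<and> even n}"
    and "(\<lambda>a. a * snd p) ` e ` (c -` {p}) = t ` {n. c (n div 2) = p \<and> odd n}"
    unfolding even odd image_image t_pair by (rule image_cong; simp)+
qed

lemma independent_transversal_of_products:
  fixes scale :: "'k::field \<Rightarrow> 'a::ring \<Rightarrow> 'a" and e :: "nat \<Rightarrow> 'a"
  assumes "vector_space scale" "inj e" "finite S"
    and growth: "\<And>F. finite F \<Longrightarrow> F \<subseteq> range e \<Longrightarrow>
        vector_space.dim scale {f * r | f r. f \<in> F \<and> r \<in> S} \<ge> 2 * card F"
  obtains t s where "inj t" "\<not> module.dependent scale (range t)"
    "\<And>n. s n \<in> S" "\<And>n. t n = e (n div 2) * s n"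
proof -
  interpret vector_space scale by fact
  define U where "U i = (\<lambda>r. e i * r) ` S" for i
  have "rado_condition (\<lambda>n. U (n div 2))"
  proof (rule rado_condition_doubled)
    fix J :: "nat set" assume "finite J"
    have "(\<Union>j\<in>J. U j) = {f * r | f r. f \<in> e ` J \<and> r \<in> S}"
      by (auto simp: U_def)
    moreover have "2 * card (e ` J) \<le> dim {f * r | f r. f \<in> e ` J \<and> r \<in> S}"
      using growth[of "e ` J"] \<open>finite J\<close> by blast
    moreover have "card (e ` J) = card J"
      using \<open>inj e\<close> by (simp add: card_image inj_on_subset)
    ultimately show "2 * card J \<le> dim (\<Union>j\<in>J. U j)"
      by simp
  qed
  moreover have "\<And>n. finite (U (n div 2))"
    using \<open>finite S\<close> by (simp add: U_def)
  ultimately obtain t where t: "\<And>n. t n \<in> U (n div 2)" "inj t" "independent (range t)"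
    by (rule rado_independent_transversal) auto
  have "\<forall>n. \<exists>r. r \<in> S \<and> t n = e (n div 2) * r"
    using t(1) by (auto simp: U_def)
  then obtain s where "\<And>n. s n \<in> S" "\<And>n. t n = e (n div 2) * s n"
    by metis
  with t(2,3) show ?thesis
    by (rule that)
qed

theorem proposition3:
  fixes scale :: "'k::field \<Rightarrow> 'a::ring \<Rightarrow> 'a"
    and e :: "nat \<Rightarrow> 'a"
    and S :: "'a set"
  assumes alg: "affine_algebra scale"
    and infdim: "\<not> (\<exists>B. finite B \<and> module.span scale B = UNIV)"
    and inj: "inj e"
    and basis_indep: "\<not> module.dependent scale (range e)"
    and basis_span: "module.span scale (range e) = UNIV"
    and S_fin: "finite S"
    and growth: "\<And>F. finite F \<Longrightarrow> F \<subseteq> range e \<Longrightarrow>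
        vector_space.dim scale {f * r | f r. f \<in> F \<and> r \<in> S} \<ge> 2 * card F"
  shows "\<exists>(m::nat) (A :: nat \<Rightarrow> 'a set) (g :: nat \<Rightarrow> 'a) (h :: nat \<Rightarrow> 'a).
           (\<Union>k<m. A k) = range e \<and>
           (\<forall>k<m. A k \<noteq> {}) \<and>
           (\<forall>k<m. \<forall>k'<m. k \<noteq> k' \<longrightarrow> A k \<inter> A k' = {}) \<and>
           (\<forall>k<m. g k \<in> S \<and> h k \<in> S) \<and>
           mutually_independent scale ({..<m} \<times> (UNIV :: bool set))
             (\<lambda>(k, b). if b then (\<lambda>a. a * g k) ` A k else (\<lambda>a. a * h k) ` A k)"
proof -
  interpret vector_space scale
    using alg by (simp add: affine_algebra_def algebra_over_def module_iff_vector_space)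
  obtain t s where t: "inj t" "independent (range t)"
    and s: "\<And>n. s n \<in> S" "\<And>n. t n = e (n div 2) * s n"
    by (rule independent_transversal_of_products[OF vector_space_axioms inj S_fin growth]) auto
  define c where "c i = (s (2 * i), s (2 * i + 1))" for i
  have c_range: "range c \<subseteq> S \<times> S"
    using s(1) by (auto simp: c_def)
  then have "finite (range c)"
    using S_fin by (simp add: finite_subset)
  then obtain m :: nat and f where f: "bij_betw f {..<m} (range c)"
    by (metis ex_bij_betw_nat_finite lessThan_atLeast0)
  define A where "A k = e ` (c -` {f k})" for k
  define Q where "Q = (\<lambda>(k, b). {n. c (n div 2) = f k \<and> (if b then even n else odd n)})"
  have family: "(\<lambda>(k, b). if b then (\<lambda>a. a * fst (f k)) ` A k else (\<lambda>a. a * snd (f k)) ` A k)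
      = (\<lambda>x. t ` Q x)"
    using paired_products_fibre_image[OF s(2) c_def] by (auto simp: fun_eq_iff A_def Q_def)
  have "Q x \<inter> Q y = {}" if "x \<in> {..<m} \<times> UNIV" "y \<in> {..<m} \<times> UNIV" "x \<noteq> y" for x y
    using that f by (auto simp: Q_def bij_betw_def inj_on_def split: if_splits)
  then have "mutually_independent scale ({..<m} \<times> UNIV)
      (\<lambda>(k, b). if b then (\<lambda>a. a * fst (f k)) ` A k else (\<lambda>a. a * snd (f k)) ` A k)"
    unfolding family by (rule mutually_independent_image[OF vector_space_axioms t])
  moreover have "\<forall>k<m. fst (f k) \<in> S \<and> snd (f k) \<in> S"
    using bij_betwE[OF f] c_range by (metis lessThan_iff mem_Times_iff subsetD)
  moreover have "(\<Union>k<m. A k) = range e" "\<forall>k<m. A k \<noteq> {}"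
    "\<forall>k<m. \<forall>k'<m. k \<noteq> k' \<longrightarrow> A k \<inter> A k' = {}"
    using fibres_partition[OF f inj] by (simp_all add: A_def)
  ultimately show ?thesis
    by (intro exI[of _ m] exI[of _ A] exI[of _ "\<lambda>k. fst (f k)"] exI[of _ "\<lambda>k. snd (f k)"] conjI)
qed

end
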